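(* Let $N\ge1$ and $p\in(0,1)$ with $\overline L:=[|\log p|/\log 2]$ and $\overline M:=[Np|\log p|/(\log 2)^2]$ satisfying $1\le\overline L\le\overline M$. Let $P^{\mathcal R-\mathcal P}_{N,\overline M,\overline L}$ be the distribution on $N\times\overline M$ binary matrices $C=(c_{i,a})$ with independent rows, each uniformly distributed among the binary vectors of length $\overline M$ with exactly $\overline L$ ones. For a variable $i$ and an integer $n\ge0$, let $\mathcal E^n_i(C)=1$ if $\sum_{j\ne i}\sum_{1\le a<b\le\overline M}c_{i,a}c_{i,b}c_{j,b}c_{j,a}>n$ and $\mathcal E^n_i(C)=0$ otherwise. Then $$\sum_{C}P^{\mathcal R-\mathcal P}_{N,\overline M,\overline L}(C)\,\mathcal E^n_i(C)\ \le\ \frac{N\overline L^6}{\overline M^3}+\Bigl(\frac{N\overline L^4}{\overline M^2}\Bigr)^{n+1}.$$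
   Context: $[x]$ denotes the integer part of $x$ and $\log$ the natural logarithm. $\mathcal E^n_i(C)$ indicates that variable $i$ lies on more than $n$ cycles of length $4$ in the bipartite variable–test graph of $C$. *)

theory Defs
  imports Complex_Main "HOL-Library.FuncSet"
begin

definition rows_RP :: "nat \<Rightarrow> nat \<Rightarrow> (nat \<Rightarrow> nat) set" where
  "rows_RP M L = {r \<in> {0..<M} \<rightarrow>\<^sub>E {0, 1}. card {a \<in> {0..<M}. r a = 1} = L}"

definition mats_RP :: "nat \<Rightarrow> nat \<Rightarrow> nat \<Rightarrow> (nat \<Rightarrow> nat \<Rightarrow> nat) set" where
  "mats_RP N M L = {0..<N} \<rightarrow>\<^sub>E rows_RP M L"

definition P_RP :: "nat \<Rightarrow> nat \<Rightarrow> nat \<Rightarrow> (nat \<Rightarrow> nat \<Rightarrow> nat) \<Rightarrow> real" where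
  "P_RP N M L C = (if C \<in> mats_RP N M L
      then (\<Prod>k\<in>{0..<N}. 1 / real (card (rows_RP M L))) else 0)"

definition cycles4 :: "nat \<Rightarrow> nat \<Rightarrow> (nat \<Rightarrow> nat \<Rightarrow> nat) \<Rightarrow> nat \<Rightarrow> nat" where
  "cycles4 N M C i = (\<Sum>j\<in>{0..<N} - {i}. \<Sum>b\<in>{0..<M}. \<Sum>a\<in>{0..<b}.
       C i a * C i b * C j b * C j a)"

definition E_event :: "nat \<Rightarrow> nat \<Rightarrow> nat \<Rightarrow> (nat \<Rightarrow> nat \<Rightarrow> nat) \<Rightarrow> nat \<Rightarrow> real" where
  "E_event n N M C i = (if cycles4 N M C i > n then 1 else 0)"

end

theory Submission
  imports Defs
begin

text \<open>
  Identify a row with its support, an L-subset of {0..<M}. Rows i and j span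
  (overlap choose 2) four-cycles, the overlap being the number of common ones. So more than
  n four-cycles through i force either one row meeting row i in at least 3 positions, or
  n + 1 rows meeting it in at least 2 positions. Given row i, a uniform row meets it in at
  least t positions with probability at most (L choose t) (M - t choose L - t) / (M choose L),
  which is at most (L^2/M)^t; rows are independent, so the union bound over single rows,
  resp. over (n + 1)-sets of rows, gives N (L^2/M)^3 + (N (L^2/M)^2)^(n+1).
\<close>

lemma binomial_mult_pow_le:
  fixes L M t :: nat
  assumes "L \<le> M"
  shows "(L choose t) * M ^ t \<le> (M choose t) * L ^ t"
proof (induction t)
  case 0
  then show ?case by simp
next
  case (Suc t)
  have "(L - t) * M = L * M - t * M" by (simp add: diff_mult_distrib)
  also have "\<dots> \<le> L * M - t * L" using assms by (intro diff_le_mono2) simp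
  also have "\<dots> = (M - t) * L" by (simp add: diff_mult_distrib2 mult.commute)
  finally have factor: "(L - t) * M \<le> (M - t) * L" .
  have absorb: "Suc t * (n choose Suc t) = (n - t) * (n choose t)" for n
    by (simp only: binomial_absorption binomial_absorb_comp)
  have "Suc t * ((L choose Suc t) * M ^ Suc t) = ((L - t) * M) * ((L choose t) * M ^ t)"
    by (simp only: mult.assoc[symmetric] absorb) (simp add: ac_simps)
  also have "\<dots> \<le> ((M - t) * L) * ((M choose t) * L ^ t)"
    by (rule mult_mono[OF factor Suc.IH]) simp_all
  also have "\<dots> = Suc t * ((M choose Suc t) * L ^ Suc t)"
    by (simp only: mult.assoc[symmetric] absorb) (simp add: ac_simps)
  finally show ?case
    by (simp only: mult_le_cancel1)
qed

lemma card_subsets_containing: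
  assumes "finite U" "T \<subseteq> U" "card T \<le> L"
  shows "card {B. B \<subseteq> U \<and> card B = L \<and> T \<subseteq> B} = (card U - card T) choose (L - card T)"
proof -
  have "finite T" using assms finite_subset by blast
  have "bij_betw (\<lambda>B. B - T) {B. B \<subseteq> U \<and> card B = L \<and> T \<subseteq> B}
      {B. B \<subseteq> U - T \<and> card B = L - card T}"
  proof (rule bij_betw_byWitness[where f' = "\<lambda>B. B \<union> T"])
    show "(\<lambda>B. B \<union> T) ` {B. B \<subseteq> U - T \<and> card B = L - card T} \<subseteq> {B. B \<subseteq> U \<and> card B = L \<and> T \<subseteq> B}"
    proof clarify
      fix B assume "B \<subseteq> U - T" "card B = L - card T"
      moreover have "finite B" using \<open>B \<subseteq> U - T\<close> assms(1) finite_subset by blast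
      moreover have "card (B \<union> T) = card B + card T"
        using calculation \<open>finite T\<close> by (intro card_Un_disjoint) auto
      ultimately show "B \<union> T \<subseteq> U \<and> card (B \<union> T) = L \<and> T \<subseteq> B \<union> T"
        using assms by auto
    qed
  qed (use assms \<open>finite T\<close> in \<open>auto simp: card_Diff_subset\<close>)
  then have "card {B. B \<subseteq> U \<and> card B = L \<and> T \<subseteq> B} = card {B. B \<subseteq> U - T \<and> card B = L - card T}"
    by (rule bij_betw_same_card)
  also have "\<dots> = card (U - T) choose (L - card T)"
    using assms by (simp add: n_subsets)
  finally show ?thesis
    using assms \<open>finite T\<close> by (simp add: card_Diff_subset)
qed

lemma card_subsets_large_inter_le:
  assumes "finite U" "A \<subseteq> U" "card A = L"
  shows "card {B. B \<subseteq> U \<and> card B = L \<and> t \<le> card (A \<inter> B)}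
    \<le> (L choose t) * ((card U - t) choose (L - t))"
proof -
  let ?Ts = "{T. T \<subseteq> A \<and> card T = t}"
  have "finite A" using assms finite_subset by blast
  have "{B. B \<subseteq> U \<and> card B = L \<and> t \<le> card (A \<inter> B)}
      \<subseteq> (\<Union>T\<in>?Ts. {B. B \<subseteq> U \<and> card B = L \<and> T \<subseteq> B})"
  proof
    fix B assume "B \<in> {B. B \<subseteq> U \<and> card B = L \<and> t \<le> card (A \<inter> B)}"
    moreover obtain T where "T \<subseteq> A \<inter> B" "card T = t"
      using calculation by (auto elim: obtain_subset_with_card_n)
    ultimately show "B \<in> (\<Union>T\<in>?Ts. {B. B \<subseteq> U \<and> card B = L \<and> T \<subseteq> B})" by blast
  qed
  then have "card {B. B \<subseteq> U \<and> card B = L \<and> t \<le> card (A \<inter> B)}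
      \<le> card (\<Union>T\<in>?Ts. {B. B \<subseteq> U \<and> card B = L \<and> T \<subseteq> B})"
    using assms by (intro card_mono) (auto simp: finite_subset)
  also have "\<dots> \<le> (\<Sum>T\<in>?Ts. card {B. B \<subseteq> U \<and> card B = L \<and> T \<subseteq> B})"
    using \<open>finite A\<close> by (intro card_UN_le) simp
  also have "\<dots> = (\<Sum>T\<in>?Ts. (card U - t) choose (L - t))"
  proof (rule sum.cong)
    fix T assume T: "T \<in> ?Ts"
    then have "card T \<le> L" using assms \<open>finite A\<close> card_mono by blast
    then show "card {B. B \<subseteq> U \<and> card B = L \<and> T \<subseteq> B} = (card U - t) choose (L - t)"
      using T assms by (subst card_subsets_containing) auto
  qed simp
  also have "\<dots> = (L choose t) * ((card U - t) choose (L - t))"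
    using assms \<open>finite A\<close> by (simp add: n_subsets)
  finally show ?thesis .
qed

lemma card_subsets_large_inter_le_pow:
  assumes "finite U" "A \<subseteq> U" "card A = L"
  shows "card {B. B \<subseteq> U \<and> card B = L \<and> t \<le> card (A \<inter> B)} * card U ^ t
    \<le> (card U choose L) * L ^ (2 * t)"
proof (cases "t \<le> L")
  case False
  then show ?thesis
    using card_subsets_large_inter_le[OF assms, of t] by (simp add: binomial_eq_0)
next
  case True
  let ?M = "card U" and ?c = "card {B. B \<subseteq> U \<and> card B = L \<and> t \<le> card (A \<inter> B)}"
  have "L \<le> ?M" using assms card_mono by blast
  have "(?M choose t) * (?c * ?M ^ t)
      \<le> (?M choose t) * ((L choose t) * ((?M - t) choose (L - t)) * ?M ^ t)"
    using card_subsets_large_inter_le[OF assms, of t] by (intro mult_left_mono mult_right_mono) simp_all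
  also have "\<dots> = ((?M choose t) * ((?M - t) choose (L - t))) * ((L choose t) * ?M ^ t)"
    by (simp only: ac_simps)
  also have "\<dots> = (?M choose L) * (L choose t) * ((L choose t) * ?M ^ t)"
    by (simp only: choose_mult[OF True \<open>L \<le> ?M\<close>])
  also have "\<dots> \<le> (?M choose L) * L ^ t * ((?M choose t) * L ^ t)"
    by (rule mult_mono[OF mult_left_mono[OF binomial_le_pow[OF True]] binomial_mult_pow_le[OF \<open>L \<le> ?M\<close>]])
      simp_all
  also have "\<dots> = (?M choose t) * ((?M choose L) * L ^ (2 * t))"
    unfolding mult_2 power_add by (simp only: ac_simps)
  finally have scaled: "(?M choose t) * (?c * ?M ^ t) \<le> (?M choose t) * ((?M choose L) * L ^ (2 * t))" .
  have "0 < ?M choose t"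
    using True \<open>L \<le> ?M\<close> by simp
  with scaled show ?thesis
    by (simp only: nat_mult_le_cancel1)
qed

lemma card_increasing_pairs:
  fixes X :: "'a::linorder set"
  assumes "finite X"
  shows "card (SIGMA b:X. {a \<in> X. a < b}) = card X choose 2"
proof -
  let ?S = "SIGMA b:X. {a \<in> X. a < b}" and ?pair = "\<lambda>(b, a). {a, b}"
  have inj: "inj_on ?pair ?S"
    by (rule inj_on_inverseI[where g = "\<lambda>A. (Max A, Min A)"]) (auto simp: max_def min_def)
  have image: "?pair ` ?S = {A. A \<subseteq> X \<and> card A = 2}"
  proof
    show "?pair ` ?S \<subseteq> {A. A \<subseteq> X \<and> card A = 2}"
      by auto
    show "{A. A \<subseteq> X \<and> card A = 2} \<subseteq> ?pair ` ?S"
    proof clarify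
      fix A assume "A \<subseteq> X" "card A = 2"
      then obtain x y where "A = {x, y}" "x \<noteq> y"
        by (auto simp: card_2_iff)
      with \<open>A \<subseteq> X\<close> have "(max x y, min x y) \<in> ?S" "A = ?pair (max x y, min x y)"
        by (auto simp: max_def min_def)
      then show "A \<in> ?pair ` ?S" by blast
    qed
  qed
  have "card ?S = card (?pair ` ?S)"
    by (rule card_image[OF inj, symmetric])
  also have "\<dots> = card X choose 2"
    unfolding image using assms by (rule n_subsets)
  finally show ?thesis .
qed

lemma binomial_le_self_pow: "n choose k \<le> n ^ k"
  by (cases "k \<le> n") (simp_all add: binomial_le_pow binomial_eq_0)

lemma sum_choose_two_gt_cases:
  fixes f :: "'a \<Rightarrow> nat"
  assumes "finite J" "n < (\<Sum>j\<in>J. f j choose 2)"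
  obtains j where "j \<in> J" "3 \<le> f j"
    | S where "S \<subseteq> J" "card S = Suc n" "\<forall>j\<in>S. 2 \<le> f j"
proof (cases "\<exists>j\<in>J. 3 \<le> f j")
  case True
  then show ?thesis using that(1) by blast
next
  case False
  have "f j choose 2 = of_bool (2 \<le> f j)" if "j \<in> J" for j
  proof -
    have "f j = 0 \<or> f j = 1 \<or> f j = 2" using False that by force
    then show ?thesis by auto
  qed
  then have "(\<Sum>j\<in>J. f j choose 2) = card {j \<in> J. 2 \<le> f j}"
    using assms(1) by (simp add: Int_def)
  then have "Suc n \<le> card {j \<in> J. 2 \<le> f j}"
    using assms(2) by simp
  then obtain S where "S \<subseteq> {j \<in> J. 2 \<le> f j}" "card S = Suc n"
    by (rule obtain_subset_with_card_n)
  then show ?thesis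
    by (intro that(2)) auto
qed

lemma prod_if_mem_mult:
  fixes a b :: "'a::comm_monoid_mult"
  assumes "finite I" "S \<subseteq> I"
  shows "(\<Prod>j\<in>I. if j \<in> S then a * b else b) = a ^ card S * b ^ card I"
proof -
  have "(\<Prod>j\<in>I. if j \<in> S then a * b else b) = (\<Prod>j\<in>I. (if j \<in> S then a else 1) * b)"
    by (rule prod.cong) auto
  also have "\<dots> = a ^ card S * b ^ card I"
    using assms by (simp add: prod.distrib prod.If_cases Int_absorb1)
  finally show ?thesis .
qed

lemma card_PiE_related_le:
  fixes Q :: "'b \<Rightarrow> 'b \<Rightarrow> bool" and q :: real
  assumes "finite I" "finite R" "i \<in> I" "S \<subseteq> I - {i}"
    and "\<And>r. r \<in> R \<Longrightarrow> real (card {s \<in> R. Q r s}) \<le> q * real (card R)"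
  shows "real (card {C \<in> PiE I (\<lambda>_. R). \<forall>j\<in>S. Q (C i) (C j)}) \<le> q ^ card S * real (card R) ^ card I"
proof -
  let ?K = "real (card R)"
  \<comment> \<open>Once row i is fixed to r, the remaining rows range independently over the sets F r j.\<close>
  define F where "F r j = (if j = i then {r} else if j \<in> S then {s \<in> R. Q r s} else R)" for r j
  define G where "G j = (if j \<in> S then q * ?K else ?K)" for j
  have "{C \<in> PiE I (\<lambda>_. R). \<forall>j\<in>S. Q (C i) (C j)} \<subseteq> (\<Union>r\<in>R. PiE I (F r))"
  proof
    fix C assume "C \<in> {C \<in> PiE I (\<lambda>_. R). \<forall>j\<in>S. Q (C i) (C j)}"
    then show "C \<in> (\<Union>r\<in>R. PiE I (F r))"
      using assms(3,4) by (intro UN_I[of "C i"]) (auto simp: PiE_iff F_def)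
  qed
  then have "card {C \<in> PiE I (\<lambda>_. R). \<forall>j\<in>S. Q (C i) (C j)} \<le> card (\<Union>r\<in>R. PiE I (F r))"
    using assms(1,2) by (intro card_mono finite_UN_I finite_PiE) (auto simp: F_def)
  also have "\<dots> \<le> (\<Sum>r\<in>R. card (PiE I (F r)))"
    using assms(2) by (rule card_UN_le)
  finally have "real (card {C \<in> PiE I (\<lambda>_. R). \<forall>j\<in>S. Q (C i) (C j)})
      \<le> (\<Sum>r\<in>R. \<Prod>j\<in>I. real (card (F r j)))"
    using assms(1) by (simp add: card_PiE flip: of_nat_sum of_nat_prod)
  also have "\<dots> \<le> (\<Sum>r\<in>R. \<Prod>j\<in>I - {i}. G j)"
  proof (rule sum_mono)
    fix r assume "r \<in> R"
    have "(\<Prod>j\<in>I. real (card (F r j))) = (\<Prod>j\<in>I - {i}. real (card (F r j)))"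
      using assms(1,3) by (simp add: prod.remove F_def)
    also have "\<dots> \<le> (\<Prod>j\<in>I - {i}. G j)"
      using assms(5)[OF \<open>r \<in> R\<close>] by (intro prod_mono) (auto simp: F_def G_def)
    finally show "(\<Prod>j\<in>I. real (card (F r j))) \<le> (\<Prod>j\<in>I - {i}. G j)" .
  qed
  also have "\<dots> = (\<Prod>j\<in>I. G j)"
    using assms(1,3,4) by (auto simp: prod.remove G_def)
  also have "\<dots> = q ^ card S * ?K ^ card I"
    using assms(1,4) by (simp add: G_def prod_if_mem_mult subset_Diff_insert)
  finally show ?thesis .
qed

definition row_support :: "nat \<Rightarrow> (nat \<Rightarrow> nat) \<Rightarrow> nat set" where
  "row_support M r = {a \<in> {0..<M}. r a = 1}"

definition overlap :: "nat \<Rightarrow> (nat \<Rightarrow> nat) \<Rightarrow> (nat \<Rightarrow> nat) \<Rightarrow> nat" where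
  "overlap M r s = card (row_support M r \<inter> row_support M s)"

lemma bij_betw_row_support:
  "bij_betw (row_support M) (rows_RP M L) {A. A \<subseteq> {0..<M} \<and> card A = L}"
proof (rule bij_betw_imageI)
  show "inj_on (row_support M) (rows_RP M L)"
  proof (rule inj_onI)
    fix r s assume r: "r \<in> rows_RP M L" and s: "s \<in> rows_RP M L"
      and supp: "row_support M r = row_support M s"
    show "r = s"
    proof (rule PiE_ext[of r "{0..<M}" "\<lambda>_. {0, 1}"])
      show "r \<in> {0..<M} \<rightarrow>\<^sub>E {0, 1}" "s \<in> {0..<M} \<rightarrow>\<^sub>E {0, 1}"
        using r s by (simp_all add: rows_RP_def)
    next
      fix a assume a: "a \<in> {0..<M}"
      then have "r a \<in> {0, 1}" "s a \<in> {0, 1}" "r a = 1 \<longleftrightarrow> s a = 1"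
        using r s supp by (auto simp: rows_RP_def row_support_def)
      then show "r a = s a" by auto
    qed
  qed
  show "row_support M ` rows_RP M L = {A. A \<subseteq> {0..<M} \<and> card A = L}"
  proof
    show "row_support M ` rows_RP M L \<subseteq> {A. A \<subseteq> {0..<M} \<and> card A = L}"
      by (auto simp: row_support_def rows_RP_def)
    show "{A. A \<subseteq> {0..<M} \<and> card A = L} \<subseteq> row_support M ` rows_RP M L"
    proof
      fix A assume "A \<in> {A. A \<subseteq> {0..<M} \<and> card A = L}"
      then have A: "A \<subseteq> {0..<M}" "card A = L" by simp_all
      define r :: "nat \<Rightarrow> nat" where "r = restrict (\<lambda>a. of_bool (a \<in> A)) {0..<M}"
      have "row_support M r = A"
        using A by (auto simp: row_support_def r_def)
      moreover have "r \<in> rows_RP M L"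
        using A \<open>row_support M r = A\<close> by (auto simp: rows_RP_def row_support_def r_def)
      ultimately show "A \<in> row_support M ` rows_RP M L" by blast
    qed
  qed
qed

lemma finite_rows_RP: "finite (rows_RP M L)"
  using bij_betw_finite[OF bij_betw_row_support] by simp

lemma card_rows_RP: "card (rows_RP M L) = M choose L"
  using bij_betw_same_card[OF bij_betw_row_support] by (simp add: n_subsets)

lemma card_rows_RP_large_overlap:
  assumes "r \<in> rows_RP M L" "0 < M"
  shows "real (card {s \<in> rows_RP M L. t \<le> overlap M r s})
    \<le> (real L ^ 2 / real M) ^ t * real (card (rows_RP M L))"
proof -
  let ?A = "row_support M r"
  have supp_r: "?A \<subseteq> {0..<M}" "card ?A = L"
    using assms(1) bij_betw_apply[OF bij_betw_row_support] by auto
  have "bij_betw (row_support M) {s \<in> rows_RP M L. t \<le> overlap M r s}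
      {B \<in> {A. A \<subseteq> {0..<M} \<and> card A = L}. t \<le> card (?A \<inter> B)}"
    by (rule bij_betw_Collect[OF bij_betw_row_support]) (simp add: overlap_def)
  then have "card {s \<in> rows_RP M L. t \<le> overlap M r s}
      = card {B. B \<subseteq> {0..<M} \<and> card B = L \<and> t \<le> card (?A \<inter> B)}"
    by (simp add: bij_betw_same_card conj_assoc)
  then have "card {s \<in> rows_RP M L. t \<le> overlap M r s} * M ^ t \<le> card (rows_RP M L) * L ^ (2 * t)"
    using card_subsets_large_inter_le_pow[of "{0..<M}" ?A L t] supp_r by (simp add: card_rows_RP)
  then have "real (card {s \<in> rows_RP M L. t \<le> overlap M r s}) * real M ^ t
      \<le> real (card (rows_RP M L)) * real L ^ (2 * t)"
    by (simp flip: of_nat_mult of_nat_power)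
  then show ?thesis
    using assms(2) by (simp add: power_divide field_simps flip: power_mult)
qed

lemma row_products_sum_eq_overlap_choose_two:
  assumes "r \<in> {0..<M} \<rightarrow> {0, 1}" "s \<in> {0..<M} \<rightarrow> {0, 1}"
  shows "(\<Sum>b\<in>{0..<M}. \<Sum>a\<in>{0..<b}. r a * r b * s b * s a) = overlap M r s choose 2"
proof -
  let ?X = "row_support M r \<inter> row_support M s"
  have "r a * r b * s b * s a = of_bool (a \<in> ?X \<and> b \<in> ?X)" if "a < M" "b < M" for a b
  proof -
    have "r a \<in> {0, 1}" "r b \<in> {0, 1}" "s a \<in> {0, 1}" "s b \<in> {0, 1}"
      using assms that by auto
    then show ?thesis
      using that by (auto simp: row_support_def)
  qed
  then have inner: "(\<Sum>a\<in>{0..<b}. r a * r b * s b * s a) = card {a \<in> ?X. a < b} * of_bool (b \<in> ?X)"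
    if "b < M" for b
  proof -
    have "{0..<b} \<inter> {a. a \<in> ?X \<and> b \<in> ?X} = (if b \<in> ?X then {a \<in> ?X. a < b} else {})"
      by auto
    then show ?thesis
      using that \<open>\<And>a b. \<lbrakk>a < M; b < M\<rbrakk> \<Longrightarrow> _\<close> by simp
  qed
  have "(\<Sum>b\<in>{0..<M}. \<Sum>a\<in>{0..<b}. r a * r b * s b * s a)
      = (\<Sum>b\<in>{0..<M}. card {a \<in> ?X. a < b} * of_bool (b \<in> ?X))"
    by (rule sum.cong) (simp_all add: inner)
  also have "\<dots> = (\<Sum>b\<in>?X. card {a \<in> ?X. a < b})"
  proof -
    have "{0..<M} \<inter> {b. b \<in> ?X} = ?X"
      by (auto simp: row_support_def)
    then show ?thesis by simp
  qed
  also have "\<dots> = card (SIGMA b:?X. {a \<in> ?X. a < b})"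
    by (simp add: row_support_def)
  also have "\<dots> = overlap M r s choose 2"
    unfolding overlap_def by (rule card_increasing_pairs) (simp add: row_support_def)
  finally show ?thesis .
qed

lemma cycles4_eq_sum_overlap_choose_two:
  assumes "C \<in> mats_RP N M L" "i < N"
  shows "cycles4 N M C i = (\<Sum>j\<in>{0..<N} - {i}. overlap M (C i) (C j) choose 2)"
proof -
  have "C j \<in> {0..<M} \<rightarrow> {0, 1}" if "j < N" for j
  proof -
    have "C j \<in> rows_RP M L" using assms(1) that by (auto simp: mats_RP_def)
    then show ?thesis by (auto simp: rows_RP_def PiE_def)
  qed
  then show ?thesis
    unfolding cycles4_def using assms(2)
    by (intro sum.cong refl row_products_sum_eq_overlap_choose_two) auto
qed

lemma finite_mats_RP: "finite (mats_RP N M L)"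
  by (simp add: mats_RP_def finite_rows_RP finite_PiE)

lemma sum_P_RP_E_event:
  "(\<Sum>C\<in>mats_RP N M L. P_RP N M L C * E_event n N M C i)
    = real (card {C \<in> mats_RP N M L. n < cycles4 N M C i}) / real (card (rows_RP M L)) ^ N"
proof -
  have "(\<Sum>C\<in>mats_RP N M L. P_RP N M L C * E_event n N M C i)
      = (\<Sum>C\<in>mats_RP N M L. of_bool (n < cycles4 N M C i)) / real (card (rows_RP M L)) ^ N"
    unfolding sum_divide_distrib
    by (intro sum.cong refl) (simp add: P_RP_def E_event_def power_one_over)
  then show ?thesis
    using finite_mats_RP by (simp add: Int_def)
qed

definition overlapping_mats :: "nat \<Rightarrow> nat \<Rightarrow> nat \<Rightarrow> nat \<Rightarrow> nat set \<Rightarrow> nat \<Rightarrow> (nat \<Rightarrow> nat \<Rightarrow> nat) set" where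
  "overlapping_mats N M L i S t = {C \<in> mats_RP N M L. \<forall>j\<in>S. t \<le> overlap M (C i) (C j)}"

lemma card_overlapping_mats_le:
  assumes "0 < M" "i < N" "S \<subseteq> {0..<N} - {i}"
  shows "real (card (overlapping_mats N M L i S t))
    \<le> ((real L ^ 2 / real M) ^ t) ^ card S * real (card (rows_RP M L)) ^ N"
proof -
  have "real (card (overlapping_mats N M L i S t))
      \<le> ((real L ^ 2 / real M) ^ t) ^ card S * real (card (rows_RP M L)) ^ card {0..<N}"
    unfolding overlapping_mats_def mats_RP_def
    using assms finite_rows_RP card_rows_RP_large_overlap
    by (intro card_PiE_related_le) auto
  then show ?thesis by simp
qed

lemma many_cycles_subset_overlapping_mats:
  assumes "i < N"
  shows "{C \<in> mats_RP N M L. n < cycles4 N M C i}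
    \<subseteq> (\<Union>j\<in>{0..<N} - {i}. overlapping_mats N M L i {j} 3)
      \<union> (\<Union>S\<in>{S. S \<subseteq> {0..<N} - {i} \<and> card S = Suc n}. overlapping_mats N M L i S 2)"
proof
  fix C assume "C \<in> {C \<in> mats_RP N M L. n < cycles4 N M C i}"
  then have C: "C \<in> mats_RP N M L"
    and many: "n < (\<Sum>j\<in>{0..<N} - {i}. overlap M (C i) (C j) choose 2)"
    using cycles4_eq_sum_overlap_choose_two assms by auto
  show "C \<in> (\<Union>j\<in>{0..<N} - {i}. overlapping_mats N M L i {j} 3)
      \<union> (\<Union>S\<in>{S. S \<subseteq> {0..<N} - {i} \<and> card S = Suc n}. overlapping_mats N M L i S 2)"
    by (rule sum_choose_two_gt_cases[OF _ many]) (auto simp: overlapping_mats_def C)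
qed

lemma card_many_cycles_le:
  fixes L M N n i :: nat
  assumes "0 < M" "i < N"
  defines "q \<equiv> real L ^ 2 / real M"
  shows "real (card {C \<in> mats_RP N M L. n < cycles4 N M C i})
    \<le> (real (N - 1) * q ^ 3 + real ((N - 1) choose Suc n) * (q ^ 2) ^ Suc n)
      * real (card (rows_RP M L)) ^ N"
proof -
  let ?J = "{0..<N} - {i}" and ?K = "real (card (rows_RP M L))"
  let ?Ov = "overlapping_mats N M L i"
  define SS where "SS = {S. S \<subseteq> ?J \<and> card S = Suc n}"
  have "card {C \<in> mats_RP N M L. n < cycles4 N M C i}
      \<le> card (\<Union>j\<in>?J. ?Ov {j} 3) + card (\<Union>S\<in>SS. ?Ov S 2)"
    using many_cycles_subset_overlapping_mats[OF assms(2), of M L n] unfolding SS_def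
    by (intro order.trans[OF card_mono card_Un_le] finite_subset[OF _ finite_mats_RP])
      (auto simp: overlapping_mats_def)
  also have "\<dots> \<le> (\<Sum>j\<in>?J. card (?Ov {j} 3)) + (\<Sum>S\<in>SS. card (?Ov S 2))"
    by (intro add_mono card_UN_le) (simp_all add: SS_def)
  finally have "real (card {C \<in> mats_RP N M L. n < cycles4 N M C i})
      \<le> (\<Sum>j\<in>?J. real (card (?Ov {j} 3))) + (\<Sum>S\<in>SS. real (card (?Ov S 2)))"
    by (simp flip: of_nat_sum of_nat_add)
  also have "\<dots> \<le> (\<Sum>j\<in>?J. q ^ 3 * ?K ^ N) + (\<Sum>S\<in>SS. (q ^ 2) ^ Suc n * ?K ^ N)"
  proof (intro add_mono sum_mono)
    show "real (card (?Ov {j} 3)) \<le> q ^ 3 * ?K ^ N" if "j \<in> ?J" for j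
      using card_overlapping_mats_le[OF assms(1,2), of "{j}" L 3] that by (simp add: q_def)
    show "real (card (?Ov S 2)) \<le> (q ^ 2) ^ Suc n * ?K ^ N" if "S \<in> SS" for S
      using card_overlapping_mats_le[OF assms(1,2), of S L 2] that by (simp add: SS_def q_def)
  qed
  also have "\<dots> = (real (N - 1) * q ^ 3 + real ((N - 1) choose Suc n) * (q ^ 2) ^ Suc n) * ?K ^ N"
    using assms(2) by (simp add: SS_def n_subsets algebra_simps)
  finally show ?thesis .
qed

theorem lemma4:
  fixes N n i :: nat and p :: real
  assumes "N \<ge> 1" and "0 < p" and "p < 1"
    and "Lb = nat \<lfloor>\<bar>ln p\<bar> / ln 2\<rfloor>"
    and "Mb = nat \<lfloor>real N * p * \<bar>ln p\<bar> / (ln 2)^2\<rfloor>"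
    and "1 \<le> Lb" and "Lb \<le> Mb"
    and "i < N"
  shows "(\<Sum>C\<in>mats_RP N Mb Lb. P_RP N Mb Lb C * E_event n N Mb C i)
     \<le> real N * real Lb ^ 6 / real Mb ^ 3 + (real N * real Lb ^ 4 / real Mb ^ 2) ^ (n + 1)"
proof -
  \<comment> \<open>Only 1 \<le> Lb \<le> Mb and i < N matter.\<close>
  define q where "q = real Lb ^ 2 / real Mb"
  have "0 < Mb" using assms(6,7) by linarith
  have K: "0 < real (card (rows_RP Mb Lb)) ^ N"
    using assms(7) by (simp add: card_rows_RP)
  have "(\<Sum>C\<in>mats_RP N Mb Lb. P_RP N Mb Lb C * E_event n N Mb C i)
      = real (card {C \<in> mats_RP N Mb Lb. n < cycles4 N Mb C i}) / real (card (rows_RP Mb Lb)) ^ N"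
    by (rule sum_P_RP_E_event)
  also have "\<dots> \<le> real (N - 1) * q ^ 3 + real ((N - 1) choose Suc n) * (q ^ 2) ^ Suc n"
    using card_many_cycles_le[OF \<open>0 < Mb\<close> assms(8), of Lb n] K
    by (simp add: q_def pos_divide_le_eq)
  also have "\<dots> \<le> real N * q ^ 3 + (real N * q ^ 2) ^ Suc n"
  proof (intro add_mono)
    have "(N - 1) choose Suc n \<le> N ^ Suc n"
      using binomial_le_self_pow[of "N - 1" "Suc n"] power_mono[of "N - 1" N "Suc n"] by simp
    then have "real ((N - 1) choose Suc n) \<le> real N ^ Suc n"
      unfolding of_nat_power[symmetric] by (rule of_nat_mono)
    then show "real ((N - 1) choose Suc n) * (q ^ 2) ^ Suc n \<le> (real N * q ^ 2) ^ Suc n"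
      unfolding power_mult_distrib by (rule mult_right_mono) simp
  qed (intro mult_right_mono; simp add: q_def)
  also have "\<dots> = real N * real Lb ^ 6 / real Mb ^ 3 + (real N * real Lb ^ 4 / real Mb ^ 2) ^ (n + 1)"
    by (simp add: q_def power_divide flip: power_mult)
  finally show ?thesis .
qed

end
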